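(* Let $X$ be a locally connected compact metric space and let $f\colon X\to X$ be a minimal homeomorphism. If there exists a Borel probability measure on $X$ which is inner-distal with respect to $f$, then $f$ is inner-distal.
   Context: A homeomorphism $f\colon X\to X$ is minimal if every orbit $\{f^n(x)\colon n\in\mathbb{Z}\}$ is dense in $X$. The proximal cell of $x$ is $\mathcal{P}(x)=\{y\in X\colon \inf_{n\in\mathbb{Z}} d(f^n(x),f^n(y))=0\}$; $f$ is inner-distal if $\operatorname{Int}\mathcal{P}(x)=\emptyset$ for all $x\in X$. A Borel probability measure $\mu$ is inner-distal with respect to $f$ if $\mu(\operatorname{Int}\mathcal{P}(x))=0$ for all $x\in X$. *)

theory Defs
  imports "HOL-Analysis.Analysis" "HOL-Probability.Probability"
begin

definition zpow :: "('a \<Rightarrow> 'a) \<Rightarrow> int \<Rightarrow> 'a \<Rightarrow> 'a" where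
  "zpow f n = (if 0 \<le> n then f ^^ nat n else (inv f) ^^ nat (- n))"

definition minimal_map :: "('a::topological_space \<Rightarrow> 'a) \<Rightarrow> bool" where
  "minimal_map f \<longleftrightarrow> (\<forall>x. closure {zpow f n x | n. True} = UNIV)"

definition proximal_cell :: "('a::metric_space \<Rightarrow> 'a) \<Rightarrow> 'a \<Rightarrow> 'a set" where
  "proximal_cell f x = {y. (INF n::int. dist (zpow f n x) (zpow f n y)) = 0}"

definition inner_distal :: "('a::metric_space \<Rightarrow> 'a) \<Rightarrow> bool" where
  "inner_distal f \<longleftrightarrow> (\<forall>x. interior (proximal_cell f x) = {})"

definition inner_distal_measure :: "'a::metric_space measure \<Rightarrow> ('a \<Rightarrow> 'a) \<Rightarrow> bool" where
  "inner_distal_measure \<mu> f \<longleftrightarrow> (\<forall>x. measure \<mu> (interior (proximal_cell f x)) = 0)"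

end

theory Submission
  imports Defs
begin

text \<open>
  The interior U of a proximal cell is open, and each iterate f^n maps it into the interior of
  another proximal cell, which is a null set for an inner-distal measure. Minimality makes the
  translates f^n(U) cover X (every orbit meets U), compactness extracts a finite subcover, and
  so X would be a finite union of null sets, which is impossible for a probability measure.
\<close>

lemma zpow_0 [simp]: "zpow f 0 x = x"
  by (simp add: zpow_def)

lemma zpow_add_one:
  assumes "bij f"
  shows "zpow f (n + 1) x = f (zpow f n x)"
proof (cases "0 \<le> n")
  case True
  then have "nat (n + 1) = Suc (nat n)" by simp
  with True show ?thesis by (simp add: zpow_def)
next
  case False
  have surj: "f (inv f y) = y" for y
    using assms by (simp add: bij_is_surj surj_f_inv_f)
  show ?thesis
  proof (cases "n = -1")
    case True
    then show ?thesis by (simp add: zpow_def surj)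
  next
    case False
    with \<open>\<not> 0 \<le> n\<close> have "nat (- n) = Suc (nat (- (n + 1)))" "\<not> 0 \<le> n + 1" by auto
    with \<open>\<not> 0 \<le> n\<close> show ?thesis
      by (simp add: zpow_def surj)
  qed
qed

lemma zpow_diff_one:
  assumes "bij f"
  shows "zpow f (n - 1) x = inv f (zpow f n x)"
  using zpow_add_one[OF assms, of "n - 1" x] assms by (simp add: bij_is_inj inv_f_f)

lemma zpow_zpow:
  assumes "bij f"
  shows "zpow f m (zpow f n x) = zpow f (m + n) x"
proof (induction m rule: int_induct[where k = 0])
  case base
  then show ?case by simp
next
  case (step1 i)
  then show ?case
    using zpow_add_one[OF assms, of i] zpow_add_one[OF assms, of "i + n"] by (simp add: algebra_simps)
next
  case (step2 i)
  then show ?case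
    using zpow_diff_one[OF assms, of i] zpow_diff_one[OF assms, of "i + n"] by (simp add: algebra_simps)
qed

lemma zpow_neg_zpow:
  assumes "bij f"
  shows "zpow f (- n) (zpow f n x) = x"
  by (simp add: zpow_zpow[OF assms])

lemma image_zpow_eq_vimage:
  assumes "bij f"
  shows "zpow f n ` U = zpow f (- n) -` U"
  using zpow_neg_zpow[OF assms, of n] zpow_neg_zpow[OF assms, of "- n"]
  by (auto intro: image_eqI[where x = "zpow f (- n) y" for y])

lemma continuous_on_funpow:
  fixes h :: "'a::topological_space \<Rightarrow> 'a"
  assumes "continuous_on UNIV h"
  shows "continuous_on UNIV (h ^^ k)"
proof (induction k)
  case 0
  then show ?case by (simp add: continuous_on_id)
next
  case (Suc k)
  then show ?case
    using assms continuous_on_compose2[of UNIV h UNIV "h ^^ k"] by simp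
qed

lemma continuous_on_zpow:
  assumes "continuous_on UNIV f" "continuous_on UNIV (inv f)"
  shows "continuous_on UNIV (zpow f n)"
  using continuous_on_funpow[OF assms(1)] continuous_on_funpow[OF assms(2)]
  by (cases "0 \<le> n") (auto simp: zpow_def fun_eq_iff)

lemma homeomorphism_UNIV_zpow:
  assumes "homeomorphism UNIV UNIV f g"
  shows "bij f" and "continuous_on UNIV (zpow f n)"
proof -
  have gf: "g (f x) = x" and fg: "f (g y) = y" for x y
    using assms by (auto simp: homeomorphism_def)
  then show "bij f"
    by (metis bijI')
  have "inv f = g"
    using inv_equality[of g f] gf fg by blast
  with assms show "continuous_on UNIV (zpow f n)"
    by (intro continuous_on_zpow) (auto simp: homeomorphism_def)
qed

lemma open_image_zpow:
  assumes "homeomorphism UNIV UNIV f g" "open U"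
  shows "open (zpow f n ` U)"
  using homeomorphism_UNIV_zpow(1)[OF assms(1)] homeomorphism_UNIV_zpow(2)[OF assms(1), of "- n"]
    assms(2)
  by (simp add: image_zpow_eq_vimage continuous_on_open_vimage)

lemma zpow_in_proximal_cell:
  assumes "bij f" "y \<in> proximal_cell f x"
  shows "zpow f k y \<in> proximal_cell f (zpow f k x)"
proof -
  define d where "d n = dist (zpow f n x) (zpow f n y)" for n
  have "range (\<lambda>n. n + k) = (UNIV :: int set)"
    by (metis surj_def diff_add_cancel)
  then have "(INF n. d (n + k)) = (INF n. d n)"
    by (metis image_image)
  with assms(2) show ?thesis
    by (simp add: proximal_cell_def zpow_zpow[OF assms(1)] d_def)
qed

lemma image_zpow_interior_proximal_cell:
  assumes "homeomorphism UNIV UNIV f g"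
  shows "zpow f n ` interior (proximal_cell f x) \<subseteq> interior (proximal_cell f (zpow f n x))"
proof (rule interior_maximal)
  show "zpow f n ` interior (proximal_cell f x) \<subseteq> proximal_cell f (zpow f n x)"
    using zpow_in_proximal_cell[OF homeomorphism_UNIV_zpow(1)[OF assms]] interior_subset by blast
qed (simp add: open_image_zpow[OF assms])

lemma minimal_map_UN_image_zpow:
  assumes "minimal_map f" "bij f" "open U" "U \<noteq> {}"
  shows "(\<Union>n. zpow f n ` U) = UNIV"
proof -
  have "y \<in> (\<Union>n. zpow f n ` U)" for y
  proof -
    have "closure {zpow f n y | n. True} = UNIV"
      using assms(1) by (simp add: minimal_map_def)
    then have "U \<inter> {zpow f n y | n. True} \<noteq> {}"
      using open_Int_closure_eq_empty[OF assms(3)] assms(4) by auto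
    then obtain n where "zpow f n y \<in> U" by blast
    then have "zpow f (- n) (zpow f n y) \<in> zpow f (- n) ` U" by blast
    then show ?thesis
      by (auto simp: zpow_neg_zpow[OF assms(2)])
  qed
  then show ?thesis by blast
qed

lemma compact_minimal_finite_cover_zpow:
  assumes "compact (UNIV :: 'a::topological_space set)" "homeomorphism UNIV UNIV f g"
    and "minimal_map f" "open U" "U \<noteq> {}"
  obtains N where "finite N" "(\<Union>n\<in>N. zpow f n ` (U :: 'a set)) = UNIV"
proof -
  have "UNIV \<subseteq> (\<Union>n. zpow f n ` U)"
    using minimal_map_UN_image_zpow[OF assms(3) homeomorphism_UNIV_zpow(1)[OF assms(2)] assms(4,5)]
    by simp
  then obtain N where "finite N" "UNIV \<subseteq> (\<Union>n\<in>N. zpow f n ` U)"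
    using compactE_image[OF assms(1)] open_image_zpow[OF assms(2,4)] by metis
  then show thesis
    using that by blast
qed

lemma prob_space_not_finite_UN_null:
  assumes "prob_space \<mu>" "finite N" "(\<Union>n\<in>N. A n) = space \<mu>"
    and "\<And>n. n \<in> N \<Longrightarrow> A n \<in> sets \<mu>" "\<And>n. n \<in> N \<Longrightarrow> measure \<mu> (A n) = 0"
  shows False
proof -
  have "1 = measure \<mu> (\<Union>n\<in>N. A n)"
    using assms(1,3) by (simp add: prob_space.prob_space)
  also have "\<dots> \<le> (\<Sum>n\<in>N. measure \<mu> (A n))"
    using assms(2,4) by (rule measure_UNION_le)
  also have "\<dots> = 0"
    using assms(5) by simp
  finally show False by simp
qed

theorem theorem2p15:
  fixes f :: "'a::metric_space \<Rightarrow> 'a"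
  assumes "compact (UNIV :: 'a set)"
    and "locally connected (UNIV :: 'a set)"
    and "\<exists>g. homeomorphism UNIV UNIV f g"
    and "minimal_map f"
    and "\<exists>\<mu>::'a measure. prob_space \<mu> \<and> sets \<mu> = sets borel \<and> inner_distal_measure \<mu> f"
  shows "inner_distal f"
proof (rule ccontr)
  obtain g where hom: "homeomorphism UNIV UNIV f g"
    using assms(3) by blast
  obtain \<mu> :: "'a measure" where \<mu>: "prob_space \<mu>" "sets \<mu> = sets borel" "inner_distal_measure \<mu> f"
    using assms(5) by blast
  assume "\<not> inner_distal f"
  then obtain x where nonempty: "interior (proximal_cell f x) \<noteq> {}"
    by (auto simp: inner_distal_def)
  obtain N where "finite N" and cover: "(\<Union>n\<in>N. zpow f n ` interior (proximal_cell f x)) = UNIV"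
    using compact_minimal_finite_cover_zpow[OF assms(1) hom assms(4) open_interior nonempty] .
  have covered: "UNIV \<subseteq> (\<Union>n\<in>N. interior (proximal_cell f (zpow f n x)))"
    unfolding cover[symmetric] by (intro UN_mono order_refl image_zpow_interior_proximal_cell[OF hom])
  show False
  proof (rule prob_space_not_finite_UN_null[OF \<mu>(1) \<open>finite N\<close>])
    show "(\<Union>n\<in>N. interior (proximal_cell f (zpow f n x))) = space \<mu>"
      using sets_eq_imp_space_eq[OF \<mu>(2)] covered by auto
  qed (use \<mu>(2,3) in \<open>auto simp: inner_distal_measure_def\<close>)
qed

end
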